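(* Let $q$ be a real number with $|q|<1$, let $\mathcal{A}$ be the algebra of linear operators on $\mathbb{C}[x,s]$, and let $A,B\in\mathcal{A}$ satisfy $BA=qAB$. Then, as an identity of formal power series in a central indeterminate $z$ with coefficients in $\mathcal{A}$, $$e_{q^2}\big(z(A+B)^2\big)=e_{q^2}(zA^2)\,e_q(zAB)\,e_{q^2}(zB^2).$$
   Context: For $|q|<1$, $(x;q)_n=\prod_{j=0}^{n-1}(1-q^jx)$, and $e_q(w)=\sum_{n\ge0}\frac{w^n}{(q;q)_n}$ (interpreted as a formal power series; for an operator argument $w=zC$ this is $\sum_{n\ge 0} \frac{z^nC^n}{(q;q)_n}$). *)

theory Defs
  imports "HOL-Computational_Algebra.Polynomial" "HOL-Computational_Algebra.Formal_Power_Series"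
begin

text \<open>The polynomial ring C[x,s], realised as (C[x])[s].\<close>
type_synonym cxs = "complex poly poly"

definition cscale :: "complex \<Rightarrow> cxs \<Rightarrow> cxs" where
  "cscale c v = smult [:c:] v"

definition clinear :: "(cxs \<Rightarrow> cxs) \<Rightarrow> bool" where
  "clinear T \<longleftrightarrow> (\<forall>u v. T (u + v) = T u + T v) \<and> (\<forall>c u. T (cscale c u) = cscale c (T u))"

lemma clinear_id: "clinear id" by (simp add: clinear_def)
lemma clinear_zero: "clinear (\<lambda>_. 0)" by (simp add: clinear_def cscale_def)
lemma clinear_add: "clinear f \<Longrightarrow> clinear g \<Longrightarrow> clinear (\<lambda>v. f v + g v)"
  by (simp add: clinear_def cscale_def smult_add_right algebra_simps)
lemma clinear_minus: "clinear f \<Longrightarrow> clinear g \<Longrightarrow> clinear (\<lambda>v. f v - g v)"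
  by (simp add: clinear_def cscale_def smult_diff_right algebra_simps)
lemma clinear_uminus: "clinear f \<Longrightarrow> clinear (\<lambda>v. - f v)"
  by (simp add: clinear_def cscale_def algebra_simps)
lemma clinear_comp: "clinear f \<Longrightarrow> clinear g \<Longrightarrow> clinear (f \<circ> g)"
  by (simp add: clinear_def)

typedef linop = "{T :: cxs \<Rightarrow> cxs. clinear T}"
  using clinear_id by blast

setup_lifting type_definition_linop

instantiation linop :: ring_1
begin
lift_definition zero_linop :: linop is "\<lambda>_. 0" by (rule clinear_zero)
lift_definition one_linop :: linop is id by (rule clinear_id)
lift_definition plus_linop :: "linop \<Rightarrow> linop \<Rightarrow> linop" is "\<lambda>f g v. f v + g v"
  by (rule clinear_add)
lift_definition minus_linop :: "linop \<Rightarrow> linop \<Rightarrow> linop" is "\<lambda>f g v. f v - g v"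
  by (rule clinear_minus)
lift_definition uminus_linop :: "linop \<Rightarrow> linop" is "\<lambda>f v. - f v"
  by (rule clinear_uminus)
lift_definition times_linop :: "linop \<Rightarrow> linop \<Rightarrow> linop" is "\<lambda>f g. f \<circ> g"
  by (rule clinear_comp)
instance
proof
  fix a b c :: linop
  show "a * b * c = a * (b * c)" by transfer (simp add: comp_assoc)
  show "a + b + c = a + (b + c)" by transfer (simp add: add.assoc)
  show "a + b = b + a" by transfer (simp add: add.commute)
  show "0 + a = a" by transfer simp
  show "- a + a = 0" by transfer simp
  show "a - b = a + - b" by transfer simp
  show "1 * a = a" by transfer simp
  show "a * 1 = a" by transfer simp
  show "(a + b) * c = a * c + b * c" by transfer (simp add: fun_eq_iff)
  show "a * (b + c) = a * b + a * c" by transfer (simp add: fun_eq_iff clinear_def)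
  show "(0::linop) \<noteq> 1"
  proof transfer
    show "(\<lambda>_. 0::cxs) \<noteq> id" by (metis id_apply one_neq_zero)
  qed
qed
end

lift_definition sc :: "complex \<Rightarrow> linop" is "\<lambda>c. cscale c"
  by (simp add: clinear_def cscale_def smult_add_right mult.commute)

definition qpoch :: "real \<Rightarrow> real \<Rightarrow> nat \<Rightarrow> real" where
  "qpoch x q n = (\<Prod>j<n. 1 - q ^ j * x)"

definition eq_fps :: "real \<Rightarrow> linop \<Rightarrow> linop fps" where
  "eq_fps q C = Abs_fps (\<lambda>n. sc (complex_of_real (1 / qpoch q q n)) * C ^ n)"

end

theory Submission
  imports Defs
begin

(*
  e_p(zC) is the unique power series G with G(0) = 1 solving the p-difference equation
  G(z) - G(pz) = zC G(z). Checking this equation on products gives Schuetzenberger's identity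
  e_p(z(X + Y)) = e_p(zX) e_p(zY) whenever YX = pXY, and the splitting
  e_q(zC) = e_{q^2}(zC) e_{q^2}(zqC).

  With p = q^2 the middle factor e_q(zAB) splits as e_p(zAB) e_p(zqAB). The pairs (A^2, AB) and
  (qAB, B^2) p-commute, and so do U = A^2 + AB = A(A + B) and V = qAB + B^2 = (qA + B)B, because
  (qA + B)A = qA(A + B) and B(A + B) = (qA + B)B. Finally U + V = (A + B)^2.
*)

unbundle fps_syntax

lemma sc_mult: "sc (a * b) = sc a * sc b"
  by transfer (simp add: cscale_def fun_eq_iff smult_smult mult.commute)

lemma sc_diff: "sc (a - b) = sc a - sc b"
  by transfer (simp add: cscale_def fun_eq_iff flip: smult_diff_left)

lemma sc_1: "sc 1 = 1"
  by transfer (simp add: cscale_def fun_eq_iff flip: one_pCons)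

lemma sc_commute: "sc a * T = T * sc a"
  by transfer (simp add: clinear_def fun_eq_iff)

lemma sc_left_commute: "NO_MATCH (sc b) T \<Longrightarrow> T * (sc a * U) = sc a * (T * U)"
  by (metis mult.assoc sc_commute)

lemma sc_sc: "sc a * (sc b * T) = sc (a * b) * T"
  by (simp add: sc_mult mult.assoc)

lemma sc_cancel:
  assumes "a \<noteq> 0" and "sc a * T = 0"
  shows "T = 0"
proof -
  have "T = sc (inverse a * a) * T" using assms(1) by (simp add: sc_1)
  also have "\<dots> = sc (inverse a) * (sc a * T)" by (simp add: sc_mult mult.assoc)
  finally show ?thesis using assms(2) by simp
qed

lemma sc_mult_power: "(sc a * T) ^ n = sc (a ^ n) * T ^ n"
proof (induction n)
  case (Suc n)
  have "(sc a * T) ^ Suc n = sc a * (T * (sc (a ^ n) * T ^ n))"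
    by (simp add: Suc mult.assoc)
  also have "\<dots> = sc (a ^ Suc n) * T ^ Suc n"
    by (simp add: sc_mult mult.assoc sc_left_commute)
  finally show ?case .
qed (simp add: sc_1)

lemma sc_twist_power:
  assumes "R * P = sc c * (P * R)"
  shows "R * P ^ n = sc (c ^ n) * (P ^ n * R)"
proof (induction n)
  case (Suc n)
  have "R * P ^ Suc n = sc c * (P * (R * P ^ n))"
    by (metis assms power_Suc mult.assoc sc_commute)
  also have "\<dots> = sc (c ^ Suc n) * (P ^ Suc n * R)"
    by (simp add: Suc sc_mult mult.assoc sc_left_commute)
  finally show ?case .
qed (simp add: sc_1)

lemma fps_mult_commute_coeffwise:
  fixes f g :: "'a :: {comm_monoid_add, times} fps"
  assumes "\<And>i j. f $ i * g $ j = g $ j * f $ i"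
  shows "f * g = g * f"
proof (rule fps_ext)
  fix n
  have "(\<Sum>i=0..n. f $ i * g $ (n - i)) = (\<Sum>i=0..n. f $ (n - i) * g $ i)"
    by (rule fps_mult_commute_lemma)
  then show "(f * g) $ n = (g * f) $ n"
    by (simp add: fps_mult_nth assms)
qed

definition fps_dilate :: "real \<Rightarrow> linop fps \<Rightarrow> linop fps" where
  "fps_dilate c f = Abs_fps (\<lambda>n. sc (of_real (c ^ n)) * f $ n)"

lemma fps_dilate_nth [simp]: "fps_dilate c f $ n = sc (of_real (c ^ n)) * f $ n"
  by (simp add: fps_dilate_def)

lemma fps_dilate_diff: "fps_dilate c (f - g) = fps_dilate c f - fps_dilate c g"
  by (rule fps_ext) (simp add: right_diff_distrib)

lemma fps_dilate_mult: "fps_dilate c (f * g) = fps_dilate c f * fps_dilate c g"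
proof (rule fps_ext)
  fix n
  have "sc (of_real (c ^ n)) * (f $ i * g $ (n - i)) =
        sc (of_real (c ^ i)) * f $ i * (sc (of_real (c ^ (n - i))) * g $ (n - i))"
    if "i \<le> n" for i
  proof -
    have "c ^ n = c ^ i * c ^ (n - i)" using that by (simp flip: power_add)
    then show ?thesis
      by (simp only: of_real_mult sc_mult mult.assoc) (simp add: sc_left_commute)
  qed
  then show "fps_dilate c (f * g) $ n = (fps_dilate c f * fps_dilate c g) $ n"
    by (simp add: fps_mult_nth sum_distrib_left)
qed

lemma fps_dilate_eq_fps: "fps_dilate c (eq_fps p C) = eq_fps p (sc (of_real c) * C)"
  by (rule fps_ext) (simp add: eq_fps_def sc_mult_power, metis mult.assoc sc_commute)

lemma one_minus_power_nonzero:
  fixes p :: real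
  assumes "\<bar>p\<bar> < 1" and "n > 0"
  shows "1 - p ^ n \<noteq> 0"
proof -
  have "\<bar>p ^ n\<bar> < 1"
    using assms by (simp add: power_abs power_less_one_iff)
  then show ?thesis by auto
qed

lemma qpoch_Suc: "qpoch p p (Suc n) = qpoch p p n * (1 - p ^ Suc n)"
  by (simp add: qpoch_def mult.commute)

lemma qpoch_nonzero:
  assumes "\<bar>p\<bar> < 1"
  shows "qpoch p p n \<noteq> 0"
proof (induction n)
  case (Suc n)
  then show ?case
    using one_minus_power_nonzero[OF assms, of "Suc n"] by (simp only: qpoch_Suc mult_eq_0_iff) simp
qed (simp add: qpoch_def)

lemma eq_fps_nth: "eq_fps p C $ n = sc (of_real (1 / qpoch p p n)) * C ^ n"
  by (simp add: eq_fps_def)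

lemma eq_fps_nth_0 [simp]: "eq_fps p C $ 0 = 1"
  by (simp add: eq_fps_nth qpoch_def sc_1)

lemma eq_fps_q_difference:
  assumes "\<bar>p\<bar> < 1"
  shows "eq_fps p C - fps_dilate p (eq_fps p C) = fps_X * fps_const C * eq_fps p C"
proof (rule fps_ext)
  fix n
  show "(eq_fps p C - fps_dilate p (eq_fps p C)) $ n = (fps_X * fps_const C * eq_fps p C) $ n"
  proof (cases n)
    case (Suc m)
    define x where "x = sc (of_real (1 / qpoch p p (Suc m)))"
    have "x - sc (of_real (p ^ Suc m)) * x = sc (of_real ((1 - p ^ Suc m) * (1 / qpoch p p (Suc m))))"
      by (simp only: x_def of_real_mult of_real_diff of_real_1 sc_mult sc_diff sc_1 left_diff_distrib mult_1_left)
    also have "(1 - p ^ Suc m) * (1 / qpoch p p (Suc m)) = 1 / qpoch p p m"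
      using qpoch_nonzero[OF assms, of "Suc m"] by (simp add: qpoch_Suc)
    finally have coeff: "x - sc (of_real (p ^ Suc m)) * x = sc (of_real (1 / qpoch p p m))" .
    have "(eq_fps p C - fps_dilate p (eq_fps p C)) $ Suc m = (x - sc (of_real (p ^ Suc m)) * x) * C ^ Suc m"
      by (simp only: fps_sub_nth fps_dilate_nth eq_fps_nth x_def left_diff_distrib mult.assoc)
    also have "\<dots> = C * (sc (of_real (1 / qpoch p p m)) * C ^ m)"
      by (simp only: coeff) (simp add: sc_left_commute)
    finally show ?thesis
      using Suc by (simp add: eq_fps_nth mult.assoc)
  qed (simp add: sc_1)
qed

lemma fps_q_difference_zero:
  assumes "\<bar>p\<bar> < 1" and "D $ 0 = 0"
    and "D - fps_dilate p D = fps_X * fps_const C * D"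
  shows "D = 0"
proof -
  have "D $ n = 0" for n
  proof (induction n)
    case (Suc m)
    have "sc (of_real (1 - p ^ Suc m)) * D $ Suc m = C * D $ m"
      using arg_cong[OF assms(3), of "\<lambda>f. f $ Suc m"]
      by (simp add: mult.assoc sc_diff sc_1 left_diff_distrib)
    with Suc have "sc (of_real (1 - p ^ Suc m)) * D $ Suc m = 0" by simp
    moreover have "complex_of_real (1 - p ^ Suc m) \<noteq> 0"
      using one_minus_power_nonzero[OF assms(1), of "Suc m"] by (simp only: of_real_eq_0_iff) simp
    ultimately show ?case by (rule sc_cancel[rotated])
  qed (rule assms(2))
  then show ?thesis by (simp add: fps_eq_iff)
qed

lemma eq_fps_unique:
  assumes "\<bar>p\<bar> < 1" and "G $ 0 = 1"
    and "G - fps_dilate p G = fps_X * fps_const C * G"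
  shows "G = eq_fps p C"
proof -
  have difference: "G - eq_fps p C - fps_dilate p (G - eq_fps p C) = fps_X * fps_const C * (G - eq_fps p C)"
    using assms(3) eq_fps_q_difference[OF assms(1), of C]
    by (simp add: fps_dilate_diff right_diff_distrib algebra_simps)
  have "G - eq_fps p C = 0"
    by (rule fps_q_difference_zero[OF assms(1) _ difference]) (simp add: assms(2))
  then show ?thesis by simp
qed

lemma eq_fps_dilate:
  assumes "\<bar>p\<bar> < 1"
  shows "fps_dilate p (eq_fps p C) = eq_fps p C - fps_X * fps_const C * eq_fps p C"
  using eq_fps_q_difference[OF assms, of C] by (simp add: eq_diff_eq diff_eq_eq add.commute)

lemma eq_fps_twist:
  assumes "R * P = sc c * (P * R)"
  shows "fps_const R * eq_fps p P = eq_fps p (sc c * P) * fps_const R"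
proof (rule fps_ext)
  fix n
  define x where "x = sc (of_real (1 / qpoch p p n))"
  have "R * (x * P ^ n) = x * (sc (c ^ n) * (P ^ n * R))"
    by (simp add: x_def sc_left_commute sc_twist_power[OF assms])
  also have "\<dots> = x * (sc c * P) ^ n * R"
    by (simp add: sc_mult_power mult.assoc)
  finally show "(fps_const R * eq_fps p P) $ n = (eq_fps p (sc c * P) * fps_const R) $ n"
    by (simp add: fps_const_mult_right eq_fps_nth x_def)
qed

lemma eq_fps_const_commute:
  "R * P = P * R \<Longrightarrow> fps_const R * eq_fps p P = eq_fps p P * fps_const R"
  using eq_fps_twist[of R P 1 p] by (simp add: sc_1)

lemma eq_fps_commute:
  assumes "C * D = D * C"
  shows "eq_fps p C * eq_fps p' D = eq_fps p' D * eq_fps p C"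
proof (rule fps_mult_commute_coeffwise)
  fix i j
  have "C ^ i * D ^ j = D ^ j * C ^ i"
    by (metis assms power_commuting_commutes)
  then show "eq_fps p C $ i * eq_fps p' D $ j = eq_fps p' D $ j * eq_fps p C $ i"
    by (simp add: eq_fps_nth mult.assoc sc_left_commute) (metis mult.assoc sc_commute)
qed

lemma eq_fps_add_q_commuting:
  assumes p: "\<bar>p\<bar> < 1" and commutation: "Y * X = sc (of_real p) * (X * Y)"
  shows "eq_fps p (X + Y) = eq_fps p X * eq_fps p Y"
proof -
  let ?EX = "eq_fps p X" and ?EY = "eq_fps p Y"
  have twist: "fps_const Y * ?EX = fps_dilate p ?EX * fps_const Y"
    using eq_fps_twist[OF commutation] by (simp add: fps_dilate_eq_fps)
  have "fps_dilate p (?EX * ?EY) = fps_dilate p ?EX * (?EY - fps_X * fps_const Y * ?EY)"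
    by (simp add: fps_dilate_mult eq_fps_dilate[OF p])
  also have "\<dots> = fps_dilate p ?EX * ?EY - fps_X * (fps_const Y * ?EX) * ?EY"
    by (simp add: right_diff_distrib twist mult.assoc)
      (metis fps_mult_fps_X_commute mult.assoc)
  also have "\<dots> = ?EX * ?EY - fps_X * fps_const (X + Y) * (?EX * ?EY)"
    by (simp add: eq_fps_dilate[OF p] algebra_simps del: fps_const_add flip: fps_const_add)
  finally have "?EX * ?EY - fps_dilate p (?EX * ?EY) = fps_X * fps_const (X + Y) * (?EX * ?EY)"
    by (simp add: algebra_simps)
  then show ?thesis
    by (intro eq_fps_unique[OF p, symmetric]) simp_all
qed

lemma eq_fps_base_square:
  assumes q: "\<bar>q\<bar> < 1"
  shows "eq_fps q C = eq_fps (q\<^sup>2) C * eq_fps (q\<^sup>2) (sc (of_real q) * C)"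
proof -
  have p: "\<bar>q\<^sup>2\<bar> < 1"
    using q by (simp add: abs_square_less_1)
  let ?E1 = "eq_fps (q\<^sup>2) C" and ?E2 = "eq_fps (q\<^sup>2) (sc (of_real q) * C)"
  have C_commutes: "C * (sc (of_real q) * C) = sc (of_real q) * C * C"
    by (simp add: sc_left_commute mult.assoc)
  have "fps_dilate q ?E2 = fps_dilate (q\<^sup>2) ?E1"
    by (simp add: fps_dilate_eq_fps sc_sc power2_eq_square)
  also have "\<dots> = ?E1 - fps_X * fps_const C * ?E1"
    by (rule eq_fps_dilate[OF p])
  finally have dilate_E2: "fps_dilate q ?E2 = ?E1 - fps_X * fps_const C * ?E1" .
  have "fps_dilate q (?E1 * ?E2) = ?E2 * (?E1 - fps_X * fps_const C * ?E1)"
    by (simp only: fps_dilate_mult dilate_E2 fps_dilate_eq_fps[of q "q\<^sup>2" C])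
  also have "\<dots> = ?E1 * ?E2 - fps_X * fps_const C * (?E1 * ?E2)"
  proof -
    have E_commute: "?E2 * ?E1 = ?E1 * ?E2"
      by (rule eq_fps_commute[OF C_commutes, symmetric])
    have "?E2 * (fps_X * fps_const C * ?E1) = fps_X * (?E2 * fps_const C) * ?E1"
      by (metis fps_mult_fps_X_commute mult.assoc)
    also have "?E2 * fps_const C = fps_const C * ?E2"
      by (rule eq_fps_const_commute[OF C_commutes, symmetric])
    finally show ?thesis
      by (simp only: right_diff_distrib E_commute mult.assoc)
  qed
  finally have "?E1 * ?E2 - fps_dilate q (?E1 * ?E2) = fps_X * fps_const C * (?E1 * ?E2)"
    by (simp add: algebra_simps)
  then show ?thesis
    by (intro eq_fps_unique[OF q, symmetric]) simp_all
qed

lemma q_commutation_consequences: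
  assumes BA: "B * A = sc (of_real q) * (A * B)"
  shows "A * B * A\<^sup>2 = sc (of_real (q\<^sup>2)) * (A\<^sup>2 * (A * B))"
    and "B\<^sup>2 * (sc (of_real q) * (A * B)) = sc (of_real (q\<^sup>2)) * (sc (of_real q) * (A * B) * B\<^sup>2)"
    and "(sc (of_real q) * (A * B) + B\<^sup>2) * (A\<^sup>2 + A * B)
           = sc (of_real (q\<^sup>2)) * ((A\<^sup>2 + A * B) * (sc (of_real q) * (A * B) + B\<^sup>2))"
    and "(A + B)\<^sup>2 = (A\<^sup>2 + A * B) + (sc (of_real q) * (A * B) + B\<^sup>2)"
proof -
  have BAT: "B * (A * T) = sc (of_real q) * (A * (B * T))" for T
    by (metis BA mult.assoc sc_left_commute)
  note normalize = BA BAT power2_eq_square mult.assoc sc_left_commute sc_sc distrib_left distrib_right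
  show "A * B * A\<^sup>2 = sc (of_real (q\<^sup>2)) * (A\<^sup>2 * (A * B))"
    by (simp add: normalize)
  show "B\<^sup>2 * (sc (of_real q) * (A * B)) = sc (of_real (q\<^sup>2)) * (sc (of_real q) * (A * B) * B\<^sup>2)"
    by (simp add: normalize)
  show "(sc (of_real q) * (A * B) + B\<^sup>2) * (A\<^sup>2 + A * B)
           = sc (of_real (q\<^sup>2)) * ((A\<^sup>2 + A * B) * (sc (of_real q) * (A * B) + B\<^sup>2))"
    by (simp add: normalize add_ac)
  show "(A + B)\<^sup>2 = (A\<^sup>2 + A * B) + (sc (of_real q) * (A * B) + B\<^sup>2)"
    by (simp add: normalize add_ac)
qed

theorem lemma1p1:
  fixes q :: real and A B :: linop
  assumes "\<bar>q\<bar> < 1"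
    and "B * A = sc (complex_of_real q) * (A * B)"
  shows "eq_fps (q\<^sup>2) ((A + B)\<^sup>2) = eq_fps (q\<^sup>2) (A\<^sup>2) * eq_fps q (A * B) * eq_fps (q\<^sup>2) (B\<^sup>2)"
proof -
  have p: "\<bar>q\<^sup>2\<bar> < 1"
    using assms(1) by (simp add: abs_square_less_1)
  note relations = q_commutation_consequences[OF assms(2)]
  have "eq_fps (q\<^sup>2) (A\<^sup>2) * eq_fps q (A * B) * eq_fps (q\<^sup>2) (B\<^sup>2)
      = eq_fps (q\<^sup>2) (A\<^sup>2) * eq_fps (q\<^sup>2) (A * B)
        * (eq_fps (q\<^sup>2) (sc (of_real q) * (A * B)) * eq_fps (q\<^sup>2) (B\<^sup>2))"
    by (simp add: eq_fps_base_square[OF assms(1)] mult.assoc)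
  also have "\<dots> = eq_fps (q\<^sup>2) (A\<^sup>2 + A * B) * eq_fps (q\<^sup>2) (sc (of_real q) * (A * B) + B\<^sup>2)"
    by (simp only: eq_fps_add_q_commuting[OF p] relations(1,2))
  also have "\<dots> = eq_fps (q\<^sup>2) ((A + B)\<^sup>2)"
    by (simp only: eq_fps_add_q_commuting[OF p] relations(3,4))
  finally show ?thesis ..
qed

end
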